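(* Let $1/n\ll\theta,\gamma\ll\tau\leq 1$ and $k\in\mathbb{N}$. Let $G$ be a digraph on $n$ vertices, $\mathcal{Q}$ a path system in $G$, and $\mathcal{P}_k=\{V_{ij}:i,j\in[k]\}$ a $k^2$-partition of $V(G)$. Let $G'$ with partition $\mathcal{P}'_k$ be obtained by contracting $\mathcal{Q}$ in $G$ with respect to $\mathcal{P}_k$. Then $|\mathcal{B}_k(\mathcal{P}'_k,G')|\leq|\mathcal{B}_k(\mathcal{P}_k,G)|$. Moreover, if $\mathcal{P}_k$ is a $(k^2,\tau,\gamma)$-partition of $G$ and $e(\mathcal{Q})\leq\theta n$, then $\mathcal{P}'_k$ is a $(k^2,\tau/2,2\gamma)$-partition of $G'$.
   Context: Hierarchy convention: $x\ll y$ means $x\leq f(y)$ for some implicitly given non-decreasing function; the statement asserts such functions exist, constants chosen from right to left. A path system in $G$ is a set of vertex-disjoint directed paths in $G$; $e(\mathcal{Q})$ is its total number of edges and $V(\mathcal{Q})$ the set of vertices on its paths. A $k^2$-partition of $V(G)$ is a family $\{V_{ij}:i,j\in[k]\}$ of pairwise disjoint (possibly empty) sets with union $V(G)$; $V_{i*}=\bigcup_jV_{ij}$, $V_{*j}=\bigcup_iV_{ij}$; $E(A,B)$ is the set of edges $ab$ with $a\in A,b\in B$; bad edges $\mathcal{B}_k(\mathcal{P}_k,G)=\bigcup_{i\neq j}E(V_{i*},V_{*j})$. A $(k^2,\tau,\gamma)$-partition of an $N$-vertex digraph is a $k^2$-partition with at most $\gamma N^2$ bad edges and $|V_{i*}|,|V_{*j}|\geq\tau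 N$ for all $i,j$. Contraction: for each path $Q\in\mathcal{Q}$, going from $u$ to $v$, create a new vertex $x_Q$. The vertex set of $G'$ is $(V(G)\setminus V(\mathcal{Q}))\cup\{x_Q:Q\in\mathcal{Q}\}$. For $y\in V(G')$ put $y^-=y^+=y$ if $y\in V(G)$, and $x_Q^-=u$, $x_Q^+=v$ if $Q$ goes from $u$ to $v$; then $yz$ is an edge of $G'$ iff $y^+z^-\in E(G)$ (so $x_Q$ inherits the inneighbours of $u$ and the outneighbours of $v$). The resulting partition is $\mathcal{P}'_k=\{V'_{ij}\}$ where $V'_{ij}$ consists of $V_{ij}\setminus V(\mathcal{Q})$ together with all $x_Q$ such that $Q$ goes from $u$ to $v$ with $u\in V_{*j}$ and $v\in V_{i*}$. *)

theory Defs
  imports Complex_Main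
begin

definition digraph :: "'a set \<Rightarrow> ('a \<times> 'a) set \<Rightarrow> bool" where
  "digraph V E \<longleftrightarrow> finite V \<and> E \<subseteq> V \<times> V \<and> (\<forall>v. (v, v) \<notin> E)"

definition dipath :: "'a set \<Rightarrow> ('a \<times> 'a) set \<Rightarrow> 'a list \<Rightarrow> bool" where
  "dipath V E p \<longleftrightarrow> p \<noteq> [] \<and> distinct p \<and> set p \<subseteq> V \<and> successively (\<lambda>x y. (x, y) \<in> E) p"

definition path_system :: "'a set \<Rightarrow> ('a \<times> 'a) set \<Rightarrow> 'a list set \<Rightarrow> bool" where
  "path_system V E Q \<longleftrightarrow> (\<forall>p\<in>Q. dipath V E p) \<and>
     (\<forall>p\<in>Q. \<forall>q\<in>Q. p \<noteq> q \<longrightarrow> set p \<inter> set q = {})"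

definition num_edges :: "'a list set \<Rightarrow> nat" where
  "num_edges Q = (\<Sum>p\<in>Q. length p - 1)"

definition path_verts :: "'a list set \<Rightarrow> 'a set" where
  "path_verts Q = (\<Union>p\<in>Q. set p)"

definition k2_partition :: "nat \<Rightarrow> 'a set \<Rightarrow> (nat \<Rightarrow> nat \<Rightarrow> 'a set) \<Rightarrow> bool" where
  "k2_partition k V P \<longleftrightarrow>
     (\<forall>i\<in>{1..k}. \<forall>j\<in>{1..k}. \<forall>i'\<in>{1..k}. \<forall>j'\<in>{1..k}.
        (i, j) \<noteq> (i', j') \<longrightarrow> P i j \<inter> P i' j' = {}) \<and>
     (\<Union>i\<in>{1..k}. \<Union>j\<in>{1..k}. P i j) = V"

definition row :: "nat \<Rightarrow> (nat \<Rightarrow> nat \<Rightarrow> 'a set) \<Rightarrow> nat \<Rightarrow> 'a set" where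
  "row k P i = (\<Union>j\<in>{1..k}. P i j)"

definition col :: "nat \<Rightarrow> (nat \<Rightarrow> nat \<Rightarrow> 'a set) \<Rightarrow> nat \<Rightarrow> 'a set" where
  "col k P j = (\<Union>i\<in>{1..k}. P i j)"

definition edges_between :: "('a \<times> 'a) set \<Rightarrow> 'a set \<Rightarrow> 'a set \<Rightarrow> ('a \<times> 'a) set" where
  "edges_between E A B = {(a, b) \<in> E. a \<in> A \<and> b \<in> B}"

definition bad_edges :: "nat \<Rightarrow> (nat \<Rightarrow> nat \<Rightarrow> 'a set) \<Rightarrow> ('a \<times> 'a) set \<Rightarrow> ('a \<times> 'a) set" where
  "bad_edges k P E = (\<Union>i\<in>{1..k}. \<Union>j\<in>{1..k}. if i \<noteq> j then edges_between E (row k P i) (col k P j) else {})"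

definition k2_tau_gamma_partition ::
  "nat \<Rightarrow> real \<Rightarrow> real \<Rightarrow> 'a set \<Rightarrow> ('a \<times> 'a) set \<Rightarrow> (nat \<Rightarrow> nat \<Rightarrow> 'a set) \<Rightarrow> bool" where
  "k2_tau_gamma_partition k \<tau> \<gamma> V E P \<longleftrightarrow>
     k2_partition k V P \<and>
     real (card (bad_edges k P E)) \<le> \<gamma> * real (card V) ^ 2 \<and>
     (\<forall>i\<in>{1..k}. real (card (row k P i)) \<ge> \<tau> * real (card V)) \<and>
     (\<forall>j\<in>{1..k}. real (card (col k P j)) \<ge> \<tau> * real (card V))"

text \<open>Contraction. Vertices of G' are Inl v (uncontracted v) or Inr p (the vertex x_p for p in Q).\<close>
definition vminus :: "'a + 'a list \<Rightarrow> 'a" where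
  "vminus y = (case y of Inl v \<Rightarrow> v | Inr p \<Rightarrow> hd p)"

definition vplus :: "'a + 'a list \<Rightarrow> 'a" where
  "vplus y = (case y of Inl v \<Rightarrow> v | Inr p \<Rightarrow> last p)"

definition contract_V :: "'a set \<Rightarrow> 'a list set \<Rightarrow> ('a + 'a list) set" where
  "contract_V V Q = Inl ` (V - path_verts Q) \<union> Inr ` Q"

definition contract_E ::
  "'a set \<Rightarrow> ('a \<times> 'a) set \<Rightarrow> 'a list set \<Rightarrow> (('a + 'a list) \<times> ('a + 'a list)) set" where
  "contract_E V E Q = {(y, z). y \<in> contract_V V Q \<and> z \<in> contract_V V Q \<and> (vplus y, vminus z) \<in> E}"

definition contract_P ::
  "nat \<Rightarrow> (nat \<Rightarrow> nat \<Rightarrow> 'a set) \<Rightarrow> 'a list set \<Rightarrow> nat \<Rightarrow> nat \<Rightarrow> ('a + 'a list) set" where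
  "contract_P k P Q i j = Inl ` (P i j - path_verts Q) \<union>
     Inr ` {p \<in> Q. hd p \<in> col k P j \<and> last p \<in> row k P i}"

end

theory Submission
  imports Defs
begin

(* Write e = e(Q). The map (y, z) \<mapsto> (y\<^sup>+, z\<^sup>-) embeds the edges of G' injectively into
   those of G, and it sends bad edges to bad edges: x\<^sub>Q lies in row i of the new partition
   only if the end of Q lies in row i of the old one (dually for columns and starts).
   For the second part, every vertex of row i is off the paths, the end of a path (whose
   contracted vertex stays in row i), or one of the e non-final path vertices. So each row
   (and dually each column) shrinks by at most e \<le> \<theta> n, and the same count gives
   n \<ge> |V(G')| \<ge> n - e \<ge> 3n/4, which absorbs the doubling of \<gamma>.
   So \<theta>, \<gamma> \<le> \<tau>/4 suffices, with no lower bound on n. *)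

lemma card_le_off_paths_plus_representatives:
  assumes "finite A" "finite Q" "\<And>p. p \<in> Q \<Longrightarrow> f p \<in> set p"
  shows "card A \<le> card (A - path_verts Q) + card {p \<in> Q. f p \<in> A} + num_edges Q"
proof -
  let ?R = "{p \<in> Q. f p \<in> A}"
  have "A \<subseteq> (A - path_verts Q) \<union> f ` ?R \<union> (\<Union>p\<in>Q. set p - {f p})"
    unfolding path_verts_def by blast
  then have "card A \<le> card ((A - path_verts Q) \<union> f ` ?R \<union> (\<Union>p\<in>Q. set p - {f p}))"
    using assms(1,2) by (intro card_mono) auto
  also have "\<dots> \<le> card (A - path_verts Q) + card (f ` ?R) + card (\<Union>p\<in>Q. set p - {f p})"
    by (meson add_mono card_Un_le le_refl order_trans)
  also have "\<dots> \<le> card (A - path_verts Q) + card ?R + (\<Sum>p\<in>Q. card (set p - {f p}))"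
    using card_image_le[of ?R f] card_UN_le[OF assms(2)] assms(2) by (intro add_mono) auto
  also have "(\<Sum>p\<in>Q. card (set p - {f p})) \<le> num_edges Q"
    unfolding num_edges_def using assms(3)
    by (intro sum_mono) (simp add: card_length diff_le_mono)
  finally show ?thesis by simp
qed

lemma path_system_nonempty: "path_system V E Q \<Longrightarrow> p \<in> Q \<Longrightarrow> p \<noteq> []"
  unfolding path_system_def dipath_def by blast

lemma path_system_set_subset: "path_system V E Q \<Longrightarrow> p \<in> Q \<Longrightarrow> set p \<subseteq> V"
  unfolding path_system_def dipath_def by blast

lemma path_system_disjoint:
  "path_system V E Q \<Longrightarrow> p \<in> Q \<Longrightarrow> q \<in> Q \<Longrightarrow> p \<noteq> q \<Longrightarrow> set p \<inter> set q = {}"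
  unfolding path_system_def by blast

lemma finite_path_system:
  assumes "finite V" "path_system V E Q"
  shows "finite Q"
proof (rule finite_imageD)
  show "inj_on hd Q"
    by (rule inj_onI) (metis assms(2) disjoint_iff hd_in_set path_system_disjoint path_system_nonempty)
  have "hd ` Q \<subseteq> V"
    using path_system_set_subset[OF assms(2)] path_system_nonempty[OF assms(2)] by fastforce
  then show "finite (hd ` Q)"
    using assms(1) by (rule finite_subset)
qed

lemma finite_contract_V: "finite V \<Longrightarrow> path_system V E Q \<Longrightarrow> finite (contract_V V Q)"
  unfolding contract_V_def using finite_path_system by blast

lemma inj_on_case_sum_contract_V:
  assumes "path_system V E Q" "\<And>p. p \<in> Q \<Longrightarrow> f p \<in> set p"
  shows "inj_on (case_sum (\<lambda>v. v) f) (contract_V V Q)"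
  using assms path_system_disjoint[OF assms(1)]
  unfolding contract_V_def path_verts_def inj_on_def
  by (auto split: sum.splits) (metis disjoint_iff)+

lemma inj_on_vplus_contract_V: "path_system V E Q \<Longrightarrow> inj_on vplus (contract_V V Q)"
  unfolding vplus_def[abs_def]
  by (intro inj_on_case_sum_contract_V) (auto dest: path_system_nonempty)

lemma inj_on_vminus_contract_V: "path_system V E Q \<Longrightarrow> inj_on vminus (contract_V V Q)"
  unfolding vminus_def[abs_def]
  by (intro inj_on_case_sum_contract_V) (auto dest: path_system_nonempty)

lemma vminus_contract_V_subset: "path_system V E Q \<Longrightarrow> vminus ` contract_V V Q \<subseteq> V"
  unfolding contract_V_def vminus_def
  using path_system_set_subset path_system_nonempty by fastforce

lemma card_contract_V_le:
  assumes "finite V" "path_system V E Q"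
  shows "card (contract_V V Q) \<le> card V"
  using card_inj_on_le[OF inj_on_vminus_contract_V vminus_contract_V_subset] assms by blast

lemma card_le_card_contract_cover:
  assumes "finite V" "path_system V E Q" "A \<subseteq> V" "B \<subseteq> contract_V V Q"
    and "\<And>p. p \<in> Q \<Longrightarrow> f p \<in> set p" "(A - path_verts Q) <+> {p \<in> Q. f p \<in> A} \<subseteq> B"
  shows "card A \<le> card B + num_edges Q"
proof -
  have fQ: "finite Q"
    using assms(1,2) by (rule finite_path_system)
  have "card A \<le> card (A - path_verts Q) + card {p \<in> Q. f p \<in> A} + num_edges Q"
    using assms(1,3,5) fQ by (intro card_le_off_paths_plus_representatives) (auto intro: finite_subset)
  also have "card (A - path_verts Q) + card {p \<in> Q. f p \<in> A} =
      card ((A - path_verts Q) <+> {p \<in> Q. f p \<in> A})"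
    using assms(1,3) fQ by (simp add: card_Plus finite_subset)
  also have "\<dots> \<le> card B"
    using assms(4,6) finite_contract_V[OF assms(1,2)] by (meson card_mono finite_subset)
  finally show ?thesis by simp
qed

lemma card_le_card_contract_V:
  assumes "finite V" "path_system V E Q"
  shows "card V \<le> card (contract_V V Q) + num_edges Q"
  using path_system_nonempty[OF assms(2)]
  by (intro card_le_card_contract_cover[OF assms, where f = last])
    (auto simp: contract_V_def Plus_def)

lemma vplus_mem_row: "y \<in> row k (contract_P k P Q) i \<Longrightarrow> vplus y \<in> row k P i"
  unfolding row_def contract_P_def by (auto simp: vplus_def)

lemma vminus_mem_col: "z \<in> col k (contract_P k P Q) j \<Longrightarrow> vminus z \<in> col k P j"
  unfolding col_def contract_P_def by (auto simp: vminus_def)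

lemma finite_bad_edges: "digraph V E \<Longrightarrow> finite (bad_edges k P E)"
  unfolding digraph_def bad_edges_def edges_between_def
  by (rule finite_subset[of _ "V \<times> V"]) auto

lemma card_bad_edges_contract_le:
  assumes "digraph V E" "path_system V E Q"
  shows "card (bad_edges k (contract_P k P Q) (contract_E V E Q)) \<le> card (bad_edges k P E)"
proof (rule card_inj_on_le)
  let ?B' = "bad_edges k (contract_P k P Q) (contract_E V E Q)"
  let ?V' = "contract_V V Q"
  have "?B' \<subseteq> ?V' \<times> ?V'"
    unfolding bad_edges_def edges_between_def contract_E_def by auto
  then show "inj_on (map_prod vplus vminus) ?B'"
    by (rule inj_on_subset[OF map_prod_inj_on[OF inj_on_vplus_contract_V[OF assms(2)]
          inj_on_vminus_contract_V[OF assms(2)]]])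
  show "map_prod vplus vminus ` ?B' \<subseteq> bad_edges k P E"
    unfolding bad_edges_def edges_between_def contract_E_def
    using vplus_mem_row vminus_mem_col by (fastforce split: if_splits)
  show "finite (bad_edges k P E)"
    using assms(1) by (rule finite_bad_edges)
qed

lemma k2_partition_subset:
  "k2_partition k V P \<Longrightarrow> i \<in> {1..k} \<Longrightarrow> j \<in> {1..k} \<Longrightarrow> P i j \<subseteq> V"
  unfolding k2_partition_def by blast

lemma k2_partition_cover:
  assumes "k2_partition k V P" "v \<in> V"
  obtains i j where "i \<in> {1..k}" "j \<in> {1..k}" "v \<in> P i j"
proof -
  have "v \<in> (\<Union>i\<in>{1..k}. \<Union>j\<in>{1..k}. P i j)"
    using assms unfolding k2_partition_def by simp
  then show ?thesis
    using that by blast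
qed

lemma k2_partition_disjoint:
  "k2_partition k V P \<Longrightarrow> i \<in> {1..k} \<Longrightarrow> j \<in> {1..k} \<Longrightarrow> i' \<in> {1..k} \<Longrightarrow> j' \<in> {1..k} \<Longrightarrow>
    (i, j) \<noteq> (i', j') \<Longrightarrow> P i j \<inter> P i' j' = {}"
  unfolding k2_partition_def by simp

lemma k2_partition_row_disjoint:
  assumes "k2_partition k V P" "i \<in> {1..k}" "i' \<in> {1..k}" "i \<noteq> i'"
  shows "row k P i \<inter> row k P i' = {}"
proof (rule equals0I)
  fix v assume "v \<in> row k P i \<inter> row k P i'"
  then obtain j j' where "j \<in> {1..k}" "j' \<in> {1..k}" "v \<in> P i j" "v \<in> P i' j'"
    unfolding row_def by blast
  then show False
    using k2_partition_disjoint[OF assms(1,2) \<open>j \<in> {1..k}\<close> assms(3) \<open>j' \<in> {1..k}\<close>] assms(4) by blast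
qed

lemma k2_partition_col_disjoint:
  assumes "k2_partition k V P" "j \<in> {1..k}" "j' \<in> {1..k}" "j \<noteq> j'"
  shows "col k P j \<inter> col k P j' = {}"
proof (rule equals0I)
  fix v assume "v \<in> col k P j \<inter> col k P j'"
  then obtain i i' where "i \<in> {1..k}" "i' \<in> {1..k}" "v \<in> P i j" "v \<in> P i' j'"
    unfolding col_def by blast
  then show False
    using k2_partition_disjoint[OF assms(1) \<open>i \<in> {1..k}\<close> assms(2) \<open>i' \<in> {1..k}\<close> assms(3)] assms(4) by blast
qed

lemma contract_P_subset:
  "k2_partition k V P \<Longrightarrow> i \<in> {1..k} \<Longrightarrow> j \<in> {1..k} \<Longrightarrow> contract_P k P Q i j \<subseteq> contract_V V Q"
  unfolding contract_P_def contract_V_def using k2_partition_subset by blast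

lemma Inr_mem_contract_P:
  assumes "k2_partition k V P" "path_system V E Q" "p \<in> Q"
  shows "\<exists>i\<in>{1..k}. \<exists>j\<in>{1..k}. last p \<in> row k P i \<and> hd p \<in> col k P j \<and>
           Inr p \<in> contract_P k P Q i j"
proof -
  have "hd p \<in> V" "last p \<in> V"
    using path_system_set_subset[OF assms(2,3)] path_system_nonempty[OF assms(2,3)] by auto
  obtain i j where "i \<in> {1..k}" "j \<in> {1..k}" "last p \<in> P i j"
    using k2_partition_cover[OF assms(1) \<open>last p \<in> V\<close>] .
  moreover obtain i' j' where "i' \<in> {1..k}" "j' \<in> {1..k}" "hd p \<in> P i' j'"
    using k2_partition_cover[OF assms(1) \<open>hd p \<in> V\<close>] .
  ultimately have "last p \<in> row k P i" "hd p \<in> col k P j'"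
    unfolding row_def col_def by blast+
  moreover from this have "Inr p \<in> contract_P k P Q i j'"
    unfolding contract_P_def using assms(3) by blast
  ultimately show ?thesis
    using \<open>i \<in> {1..k}\<close> \<open>j' \<in> {1..k}\<close> by blast
qed

lemma Inr_mem_contract_row:
  assumes "k2_partition k V P" "path_system V E Q" "p \<in> Q" "i \<in> {1..k}" "last p \<in> row k P i"
  shows "Inr p \<in> row k (contract_P k P Q) i"
proof -
  obtain i' j where "i' \<in> {1..k}" "j \<in> {1..k}" "last p \<in> row k P i'" "Inr p \<in> contract_P k P Q i' j"
    using Inr_mem_contract_P[OF assms(1-3)] by blast
  moreover have "i' = i"
    using k2_partition_row_disjoint[OF assms(1) assms(4) \<open>i' \<in> {1..k}\<close>] assms(5)
      \<open>last p \<in> row k P i'\<close> by blast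
  ultimately show ?thesis
    unfolding row_def by blast
qed

lemma Inr_mem_contract_col:
  assumes "k2_partition k V P" "path_system V E Q" "p \<in> Q" "j \<in> {1..k}" "hd p \<in> col k P j"
  shows "Inr p \<in> col k (contract_P k P Q) j"
proof -
  obtain i j' where "i \<in> {1..k}" "j' \<in> {1..k}" "hd p \<in> col k P j'" "Inr p \<in> contract_P k P Q i j'"
    using Inr_mem_contract_P[OF assms(1-3)] by blast
  moreover have "j' = j"
    using k2_partition_col_disjoint[OF assms(1) assms(4) \<open>j' \<in> {1..k}\<close>] assms(5)
      \<open>hd p \<in> col k P j'\<close> by blast
  ultimately show ?thesis
    unfolding col_def by blast
qed

lemma k2_partition_contract_P:
  assumes "k2_partition k V P" "path_system V E Q"
  shows "k2_partition k (contract_V V Q) (contract_P k P Q)"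
proof -
  have "contract_P k P Q i j \<inter> contract_P k P Q i' j' = {}"
    if ij: "i \<in> {1..k}" "j \<in> {1..k}" "i' \<in> {1..k}" "j' \<in> {1..k}" "(i, j) \<noteq> (i', j')"
    for i j i' j'
    using k2_partition_disjoint[OF assms(1) ij] k2_partition_row_disjoint[OF assms(1), of i i']
      k2_partition_col_disjoint[OF assms(1), of j j'] ij
    unfolding contract_P_def by blast
  moreover have "contract_V V Q \<subseteq> (\<Union>i\<in>{1..k}. \<Union>j\<in>{1..k}. contract_P k P Q i j)"
  proof
    fix x assume "x \<in> contract_V V Q"
    then consider v where "x = Inl v" "v \<in> V - path_verts Q" | p where "x = Inr p" "p \<in> Q"
      unfolding contract_V_def by blast
    then show "x \<in> (\<Union>i\<in>{1..k}. \<Union>j\<in>{1..k}. contract_P k P Q i j)"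
    proof cases
      case 1
      then obtain i j where "i \<in> {1..k}" "j \<in> {1..k}" "v \<in> P i j"
        using k2_partition_cover[OF assms(1)] by blast
      then show ?thesis
        using 1 unfolding contract_P_def by blast
    next
      case 2
      then show ?thesis
        using Inr_mem_contract_P[OF assms] by blast
    qed
  qed
  moreover have "(\<Union>i\<in>{1..k}. \<Union>j\<in>{1..k}. contract_P k P Q i j) \<subseteq> contract_V V Q"
    using contract_P_subset[OF assms(1)] by blast
  ultimately show ?thesis
    unfolding k2_partition_def by blast
qed

lemma card_row_le_card_contract_row:
  assumes "finite V" "path_system V E Q" "k2_partition k V P" "i \<in> {1..k}"
  shows "card (row k P i) \<le> card (row k (contract_P k P Q) i) + num_edges Q"
proof (rule card_le_card_contract_cover[OF assms(1,2), where f = last])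
  show "row k P i \<subseteq> V"
    unfolding row_def using k2_partition_subset[OF assms(3,4)] by blast
  show "row k (contract_P k P Q) i \<subseteq> contract_V V Q"
    unfolding row_def using contract_P_subset[OF assms(3,4)] by blast
  show "\<And>p. p \<in> Q \<Longrightarrow> last p \<in> set p"
    using path_system_nonempty[OF assms(2)] by simp
  have "Inl ` (row k P i - path_verts Q) \<subseteq> row k (contract_P k P Q) i"
    unfolding row_def contract_P_def by blast
  moreover have "Inr ` {p \<in> Q. last p \<in> row k P i} \<subseteq> row k (contract_P k P Q) i"
    using Inr_mem_contract_row[OF assms(3,2) _ assms(4)] by blast
  ultimately show "(row k P i - path_verts Q) <+> {p \<in> Q. last p \<in> row k P i}
      \<subseteq> row k (contract_P k P Q) i"
    unfolding Plus_def by blast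
qed

lemma card_col_le_card_contract_col:
  assumes "finite V" "path_system V E Q" "k2_partition k V P" "j \<in> {1..k}"
  shows "card (col k P j) \<le> card (col k (contract_P k P Q) j) + num_edges Q"
proof (rule card_le_card_contract_cover[OF assms(1,2), where f = hd])
  show "col k P j \<subseteq> V"
    unfolding col_def using k2_partition_subset[OF assms(3) _ assms(4)] by blast
  show "col k (contract_P k P Q) j \<subseteq> contract_V V Q"
    unfolding col_def using contract_P_subset[OF assms(3) _ assms(4)] by blast
  show "\<And>p. p \<in> Q \<Longrightarrow> hd p \<in> set p"
    using path_system_nonempty[OF assms(2)] by simp
  have "Inl ` (col k P j - path_verts Q) \<subseteq> col k (contract_P k P Q) j"
    unfolding col_def contract_P_def by blast
  moreover have "Inr ` {p \<in> Q. hd p \<in> col k P j} \<subseteq> col k (contract_P k P Q) j"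
    using Inr_mem_contract_col[OF assms(3,2) _ assms(4)] by blast
  ultimately show "(col k P j - path_verts Q) <+> {p \<in> Q. hd p \<in> col k P j}
      \<subseteq> col k (contract_P k P Q) j"
    unfolding Plus_def by blast
qed

lemma k2_tau_gamma_partition_contract:
  assumes "digraph V E" "path_system V E Q" "k2_tau_gamma_partition k \<tau> \<gamma> V E P"
    and "real (num_edges Q) \<le> \<theta> * real (card V)" "\<theta> \<le> \<tau> / 4" "0 \<le> \<tau>" "\<tau> \<le> 1" "0 \<le> \<gamma>"
  shows "k2_tau_gamma_partition k (\<tau> / 2) (2 * \<gamma>) (contract_V V Q) (contract_E V E Q) (contract_P k P Q)"
proof -
  define n where "n = real (card V)"
  define n' where "n' = real (card (contract_V V Q))"
  define e where "e = real (num_edges Q)"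
  have fV: "finite V" using assms(1) unfolding digraph_def by blast
  have kP: "k2_partition k V P"
    and bad: "real (card (bad_edges k P E)) \<le> \<gamma> * n\<^sup>2"
    and rows: "\<And>i. i \<in> {1..k} \<Longrightarrow> \<tau> * n \<le> real (card (row k P i))"
    and cols: "\<And>j. j \<in> {1..k} \<Longrightarrow> \<tau> * n \<le> real (card (col k P j))"
    using assms(3) unfolding k2_tau_gamma_partition_def n_def by auto
  have "n' \<le> n" "n \<le> n' + e"
    using card_contract_V_le[OF fV assms(2)] card_le_card_contract_V[OF fV assms(2)]
    unfolding n_def n'_def e_def by linarith+
  have e_le: "e \<le> \<tau> / 4 * n"
    using assms(4,5) mult_right_mono[OF assms(5), of n] unfolding e_def n_def by simp
  have "\<gamma> * n\<^sup>2 \<le> 2 * \<gamma> * n'\<^sup>2"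
  proof -
    have "3 / 4 * n \<le> n'"
      using \<open>n \<le> n' + e\<close> e_le assms(7) mult_right_mono[OF assms(7), of n] n_def by simp
    then have "(3 / 4 * n)\<^sup>2 \<le> n'\<^sup>2"
      by (rule power_mono) (simp add: n_def)
    then have "9 / 16 * n\<^sup>2 \<le> n'\<^sup>2"
      by (simp add: power_mult_distrib power2_eq_square)
    then show ?thesis
      using assms(8) mult_left_mono[of "n\<^sup>2" "2 * n'\<^sup>2" \<gamma>] zero_le_power2[of n] by linarith
  qed
  then have bad': "real (card (bad_edges k (contract_P k P Q) (contract_E V E Q))) \<le> 2 * \<gamma> * n'\<^sup>2"
    using card_bad_edges_contract_le[OF assms(1,2), of k P] bad by linarith
  have shrink: "\<tau> / 2 * n' \<le> real c'" if "\<tau> * n \<le> real c" "c \<le> c' + num_edges Q" for c c'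
  proof -
    have "\<tau> / 2 * n' \<le> \<tau> / 2 * n"
      using \<open>n' \<le> n\<close> assms(6) by (simp add: mult_left_mono)
    then show ?thesis
      using that e_le unfolding e_def by linarith
  qed
  show ?thesis
    unfolding k2_tau_gamma_partition_def n'_def[symmetric]
  proof (intro conjI ballI)
    show "k2_partition k (contract_V V Q) (contract_P k P Q)"
      by (rule k2_partition_contract_P[OF kP assms(2)])
    show "real (card (bad_edges k (contract_P k P Q) (contract_E V E Q))) \<le> 2 * \<gamma> * n'\<^sup>2"
      by (rule bad')
  next
    fix i assume i: "i \<in> {1..k}"
    show "\<tau> / 2 * n' \<le> real (card (row k (contract_P k P Q) i))"
      by (rule shrink[OF rows[OF i] card_row_le_card_contract_row[OF fV assms(2) kP i]])
  next
    fix j assume j: "j \<in> {1..k}"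
    show "\<tau> / 2 * n' \<le> real (card (col k (contract_P k P Q) j))"
      by (rule shrink[OF cols[OF j] card_col_le_card_contract_col[OF fV assms(2) kP j]])
  qed
qed

theorem proposition4p9:
  shows "\<forall>\<tau>::real. 0 < \<tau> \<and> \<tau> \<le> 1 \<longrightarrow>
    (\<exists>\<delta>>0. \<forall>\<theta> \<gamma>::real. 0 < \<theta> \<and> \<theta> \<le> \<delta> \<and> 0 < \<gamma> \<and> \<gamma> \<le> \<delta> \<longrightarrow>
      (\<exists>n0::nat. \<forall>n\<ge>n0. \<forall>(k::nat) (V::'a set) E Q P.
         digraph V E \<and> card V = n \<and> path_system V E Q \<and> k2_partition k V P \<longrightarrow>
         card (bad_edges k (contract_P k P Q) (contract_E V E Q)) \<le> card (bad_edges k P E) \<and>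
         (k2_tau_gamma_partition k \<tau> \<gamma> V E P \<and> real (num_edges Q) \<le> \<theta> * real n \<longrightarrow>
          k2_tau_gamma_partition k (\<tau> / 2) (2 * \<gamma>) (contract_V V Q) (contract_E V E Q)
            (contract_P k P Q))))"
  apply (intro allI impI)
  subgoal for \<tau>
    by (intro exI[of _ "\<tau> / 4"] conjI allI impI exI[of _ "0::nat"])
      (auto intro: card_bad_edges_contract_le k2_tau_gamma_partition_contract)
  done

end
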